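(* For every positive integer $m$ and every positive integer $n$, $u_{m,n}\equiv^2_{m-1,n}v_{m,n}$.
   Context: Let $\Sigma_m=\{a_0,\dots,a_{m-1}\}$. For positive integers $i,n$ define words: $u_{1,n}=a_0$, $v_{1,n}=\varepsilon$ (empty word); $u_{2,n}=a_0(a_1a_0)^{2n}$, $v_{2,n}=(a_1a_0)^{2n}$; $u_{2i+1,n}=(a_0a_1\cdots a_{2i})^n\,u_{2i,n}$, $v_{2i+1,n}=(a_0a_1\cdots a_{2i})^n\,v_{2i,n}$; $u_{2i+2,n}=u_{2i+1,n}\,(a_{2i+1}a_{2i}\cdots a_0)^n$, $v_{2i+2,n}=v_{2i+1,n}\,(a_{2i+1}a_{2i}\cdots a_0)^n$. Words are finite structures with universe $\{1,\dots,|w|\}$, unary predicates $Q_a$ marking positions carrying $a$, and the order $<$. $\mathrm{FO}^2_n[<]$ is first-order logic over this signature using only the variables $x,y$ with quantifier depth at most $n$; $\mathrm{FO}^2_{k,n}[<]$ is the set of its formulas in which every path in the parse tree has at most $k$ blocks of alternating quantifiers. $u\equiv^2_{k,n}v$ means $u$ and $v$ satisfy the same sentences of $\mathrm{FO}^2_{k,n}[<]$. *)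

theory Defs
  imports Main
begin

text \<open>Letters a_0, a_1, ... are represented by natural numbers 0, 1, ...;
  words are lists of letters. Positions are 0-based (0 ..< length w), which is
  order-isomorphic to the paper's 1..|w|.\<close>

datatype var = X | Y

datatype fo2 =
    TT
  | FF
  | Lett nat var
  | NLett nat var
  | Less var var
  | NLess var var
  | Eq var var
  | NEq var var
  | Neg fo2
  | Conj fo2 fo2
  | Disj fo2 fo2
  | Ex var fo2
  | All var fo2

text \<open>Negation is a constructor; for counting alternation blocks, formulas are
  considered after pushing negations to the atoms (negation swaps the
  quantifier type along the path), as in the standard definition.\<close>

fun sat :: "nat list \<Rightarrow> (var \<Rightarrow> nat) \<Rightarrow> fo2 \<Rightarrow> bool" where
  "sat w s TT = True"
| "sat w s FF = False"
| "sat w s (Lett a x) = (w ! s x = a)"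
| "sat w s (NLett a x) = (w ! s x \<noteq> a)"
| "sat w s (Less x y) = (s x < s y)"
| "sat w s (NLess x y) = (\<not> s x < s y)"
| "sat w s (Eq x y) = (s x = s y)"
| "sat w s (NEq x y) = (s x \<noteq> s y)"
| "sat w s (Neg f) = (\<not> sat w s f)"
| "sat w s (Conj f g) = (sat w s f \<and> sat w s g)"
| "sat w s (Disj f g) = (sat w s f \<or> sat w s g)"
| "sat w s (Ex x f) = (\<exists>i < length w. sat w (s(x := i)) f)"
| "sat w s (All x f) = (\<forall>i < length w. sat w (s(x := i)) f)"

fun freev :: "fo2 \<Rightarrow> var set" where
  "freev TT = {}"
| "freev FF = {}"
| "freev (Lett a x) = {x}"
| "freev (NLett a x) = {x}"
| "freev (Less x y) = {x, y}"
| "freev (NLess x y) = {x, y}"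
| "freev (Eq x y) = {x, y}"
| "freev (NEq x y) = {x, y}"
| "freev (Neg f) = freev f"
| "freev (Conj f g) = freev f \<union> freev g"
| "freev (Disj f g) = freev f \<union> freev g"
| "freev (Ex x f) = freev f - {x}"
| "freev (All x f) = freev f - {x}"

fun letters :: "fo2 \<Rightarrow> nat set" where
  "letters (Lett a x) = {a}"
| "letters (NLett a x) = {a}"
| "letters (Neg f) = letters f"
| "letters (Conj f g) = letters f \<union> letters g"
| "letters (Disj f g) = letters f \<union> letters g"
| "letters (Ex x f) = letters f"
| "letters (All x f) = letters f"
| "letters _ = {}"

fun qdepth :: "fo2 \<Rightarrow> nat" where
  "qdepth (Neg f) = qdepth f"
| "qdepth (Conj f g) = max (qdepth f) (qdepth g)"
| "qdepth (Disj f g) = max (qdepth f) (qdepth g)"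
| "qdepth (Ex x f) = Suc (qdepth f)"
| "qdepth (All x f) = Suc (qdepth f)"
| "qdepth _ = 0"

text \<open>blk pol prev f: the maximal number of quantifier blocks on a path of the
  parse tree of f (in negation normal form). pol = True means we are under an
  even number of negations; prev is the type of the last quantifier seen above
  (Some True = existential, Some False = universal, None = none yet).\<close>
fun blk :: "bool \<Rightarrow> bool option \<Rightarrow> fo2 \<Rightarrow> nat" where
  "blk p q (Neg f) = blk (\<not> p) q f"
| "blk p q (Conj f g) = max (blk p q f) (blk p q g)"
| "blk p q (Disj f g) = max (blk p q f) (blk p q g)"
| "blk p q (Ex x f) = (if q = Some p then 0 else 1) + blk p (Some p) f"
| "blk p q (All x f) = (if q = Some (\<not> p) then 0 else 1) + blk p (Some (\<not> p)) f"
| "blk p q _ = 0"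

definition alt_blocks :: "fo2 \<Rightarrow> nat" where
  "alt_blocks f = blk True None f"

definition FO2_kn :: "nat \<Rightarrow> nat \<Rightarrow> nat \<Rightarrow> fo2 set" where
  "FO2_kn m k n = {f. freev f = {} \<and> letters f \<subseteq> {..<m} \<and> qdepth f \<le> n \<and> alt_blocks f \<le> k}"

definition models :: "nat list \<Rightarrow> fo2 \<Rightarrow> bool" where
  "models w f = sat w (\<lambda>_. 0) f"

definition equiv2 :: "nat \<Rightarrow> nat \<Rightarrow> nat \<Rightarrow> nat list \<Rightarrow> nat list \<Rightarrow> bool" where
  "equiv2 m k n u v = (\<forall>f \<in> FO2_kn m k n. models u f \<longleftrightarrow> models v f)"

text \<open>For m = 2i+1 (i \<ge> 1) the prepended block is (a_0 ... a_{2i})^n = (a_0..a_{m-1})^n;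
  for m = 2i+2 (i \<ge> 1) the appended block is (a_{2i+1} ... a_0)^n = (a_{m-1}..a_0)^n.\<close>
fun uw :: "nat \<Rightarrow> nat \<Rightarrow> nat list" where
  "uw 0 n = []"
| "uw (Suc 0) n = [0]"
| "uw (Suc (Suc 0)) n = 0 # concat (replicate (2 * n) [1, 0])"
| "uw (Suc (Suc (Suc k))) n =
     (if odd (Suc (Suc (Suc k)))
      then concat (replicate n [0..<Suc (Suc (Suc k))]) @ uw (Suc (Suc k)) n
      else uw (Suc (Suc k)) n @ concat (replicate n (rev [0..<Suc (Suc (Suc k))])))"

fun vw :: "nat \<Rightarrow> nat \<Rightarrow> nat list" where
  "vw 0 n = []"
| "vw (Suc 0) n = []"
| "vw (Suc (Suc 0)) n = concat (replicate (2 * n) [1, 0])"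
| "vw (Suc (Suc (Suc k))) n =
     (if odd (Suc (Suc (Suc k)))
      then concat (replicate n [0..<Suc (Suc (Suc k))]) @ vw (Suc (Suc k)) n
      else vw (Suc (Suc k)) n @ concat (replicate n (rev [0..<Suc (Suc (Suc k))])))"

end

theory Submission
  imports Defs
begin

(*
  The proof uses an Ehrenfeucht-Fraisse game for FO2 that keeps track of quantifier
  alternation: a game pattern lists the remaining blocks, Spoiler moves in the current word
  while he stays in the current block and switches words when he opens the next block, and a
  block may be restricted to moves to the left or to the right of the previous pebble.

  By induction on m, Duplicator wins on u_{m,n} and v_{m,n} every game with fewer than n
  rounds and at most m - 1 free blocks followed by one directed block.  For m = 2 she keeps
  her pebble next to Spoiler's.  Going from m - 1 to m adds the factor (a_0 ... a_{m-1})^n on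
  the left (on the right up to mirroring): Duplicator copies Spoiler inside this prefix,
  follows the old strategy while both pebbles lie in the old words, and when Spoiler leaves
  them leftwards during the last free block she retreats to the last copy of the factor and
  then steps back one copy per round.  Games with m - 1 blocks and n rounds are won from any
  opening, which yields equivalence for FO2 sentences with m - 1 alternation blocks and
  quantifier depth n.
*)

section \<open>An alternation-aware FO2 game on words\<close>

datatype move = Free | Left | Right

fun allowed :: "move \<Rightarrow> nat \<Rightarrow> nat \<Rightarrow> bool" where
  "allowed Free a a' = True"
| "allowed Left a a' = (a' \<le> a)"
| "allowed Right a a' = (a \<le> a')"

definition same_order :: "nat \<Rightarrow> nat \<Rightarrow> nat \<Rightarrow> nat \<Rightarrow> bool" where
  "same_order a a' b b' \<longleftrightarrow> (a < a' \<longleftrightarrow> b < b') \<and> (a' < a \<longleftrightarrow> b' < b)"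

lemma same_order_refl [simp]: "same_order a a' a a'"
  by (simp add: same_order_def)

lemma same_order_stay [simp]: "same_order a a b b"
  by (simp add: same_order_def)

lemma same_order_shift:
  "same_order (a - k) (a' - k) (b - l) (b' - l) \<Longrightarrow> k \<le> a \<Longrightarrow> k \<le> a' \<Longrightarrow> l \<le> b \<Longrightarrow> l \<le> b' \<Longrightarrow>
   same_order a a' b b'"
  by (simp add: same_order_def less_diff_iff)

text \<open>\<open>wins \<pi> r A B a b\<close>: Duplicator, whose pebble on \<open>b\<close> answers Spoiler's pebble on
  \<open>a\<close>, survives \<open>r\<close> more rounds.  The pattern \<open>\<pi>\<close> lists the remaining quantifier blocks:
  Spoiler may move in \<open>A\<close> as allowed by the head of \<open>\<pi>\<close>, or open the next block by moving
  in \<open>B\<close>.  Only the last pebble pair is kept, so a new pebble is compared with it alone.\<close>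
fun wins :: "move list \<Rightarrow> nat \<Rightarrow> nat list \<Rightarrow> nat list \<Rightarrow> nat \<Rightarrow> nat \<Rightarrow> bool" where
  "wins \<pi> 0 A B a b \<longleftrightarrow> a < length A \<and> b < length B \<and> A ! a = B ! b"
| "wins \<pi> (Suc r) A B a b \<longleftrightarrow> a < length A \<and> b < length B \<and> A ! a = B ! b \<and>
    (case \<pi> of [] \<Rightarrow> True | T # \<rho> \<Rightarrow>
      (\<forall>a'<length A. allowed T a a' \<longrightarrow> (\<exists>b'<length B. same_order a a' b b' \<and> wins \<pi> r A B a' b')) \<and>
      (case \<rho> of [] \<Rightarrow> True | T' # \<rho>' \<Rightarrow>
         (\<forall>b'<length B. allowed T' b b' \<longrightarrow> (\<exists>a'<length A. same_order b b' a a' \<and> wins \<rho> r B A b' a'))))"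

lemma wins_letters: "wins \<pi> r A B a b \<Longrightarrow> a < length A \<and> b < length B \<and> A ! a = B ! b"
  by (cases r) auto

lemma wins_Nil: "wins [] r A B a b \<longleftrightarrow> a < length A \<and> b < length B \<and> A ! a = B ! b"
  by (cases r) auto

lemma wins_Suc_same:
  "wins \<pi> (Suc r) A B a b \<Longrightarrow> \<pi> \<noteq> [] \<Longrightarrow> a' < length A \<Longrightarrow> allowed (hd \<pi>) a a' \<Longrightarrow>
   \<exists>b'<length B. same_order a a' b b' \<and> wins \<pi> r A B a' b'"
  by (cases \<pi>) auto

lemma wins_Suc_switch:
  "wins (T # \<rho>) (Suc r) A B a b \<Longrightarrow> \<rho> \<noteq> [] \<Longrightarrow> b' < length B \<Longrightarrow> allowed (hd \<rho>) b b' \<Longrightarrow>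
   \<exists>a'<length A. same_order b b' a a' \<and> wins \<rho> r B A b' a'"
  by (cases \<rho>) auto

lemma wins_SucI:
  assumes "a < length A" "b < length B" "A ! a = B ! b"
    and "\<And>a'. a' < length A \<Longrightarrow> allowed T a a' \<Longrightarrow>
           \<exists>b'<length B. same_order a a' b b' \<and> wins (T # \<rho>) r A B a' b'"
    and "\<And>T' \<rho>' b'. \<rho> = T' # \<rho>' \<Longrightarrow> b' < length B \<Longrightarrow> allowed T' b b' \<Longrightarrow>
           \<exists>a'<length A. same_order b b' a a' \<and> wins \<rho> r B A b' a'"
  shows "wins (T # \<rho>) (Suc r) A B a b"
  using assms by (auto split: list.split)

definition pattern_weaker :: "move list \<Rightarrow> move list \<Rightarrow> bool" where
  "pattern_weaker \<pi>' \<pi> \<longleftrightarrow> length \<pi>' \<le> length \<pi> \<and>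
     (\<forall>k<length \<pi>'. \<forall>a a'. allowed (\<pi>' ! k) a a' \<longrightarrow> allowed (\<pi> ! k) a a')"

lemma pattern_weaker_ConsD:
  assumes "pattern_weaker (T' # \<rho>') \<pi>"
  obtains T \<rho> where "\<pi> = T # \<rho>" "\<And>a a'. allowed T' a a' \<Longrightarrow> allowed T a a'" "pattern_weaker \<rho>' \<rho>"
proof (cases \<pi>)
  case (Cons T \<rho>)
  have "allowed T a a'" if "allowed T' a a'" for a a'
    using assms that Cons unfolding pattern_weaker_def by fastforce
  moreover have "allowed (\<rho> ! k) a a'" if "k < length \<rho>'" "allowed (\<rho>' ! k) a a'" for k a a'
    using assms that Cons unfolding pattern_weaker_def by (metis Suc_less_eq length_Cons nth_Cons_Suc)
  then have "pattern_weaker \<rho>' \<rho>" using assms Cons by (simp add: pattern_weaker_def)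
  ultimately show thesis using that Cons by blast
qed (use assms in \<open>simp add: pattern_weaker_def\<close>)

lemma pattern_weaker_prefix: "pattern_weaker \<pi> (\<pi> @ \<rho>)"
  by (simp add: pattern_weaker_def nth_append)

lemma pattern_weaker_replicate_Free:
  assumes "k \<le> l" and "length \<rho> \<le> 1"
  shows "pattern_weaker (replicate k Free @ \<rho>) (replicate l Free @ \<rho>)"
proof -
  have "allowed ((replicate l Free @ \<rho>) ! q) a a'"
    if "q < k + length \<rho>" "allowed ((replicate k Free @ \<rho>) ! q) a a'" for q a a'
    using that assms by (cases "q < l") (auto simp: nth_append)
  then show ?thesis using assms by (auto simp: pattern_weaker_def)
qed

lemma wins_mono: "wins \<pi> r A B a b \<Longrightarrow> r' \<le> r \<Longrightarrow> pattern_weaker \<pi>' \<pi> \<Longrightarrow> wins \<pi>' r' A B a b"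
proof (induction r' arbitrary: r \<pi> \<pi>' A B a b)
  case 0
  then show ?case using wins_letters by auto
next
  case (Suc r')
  then obtain r0 where r0: "r = Suc r0" "r' \<le> r0" by (cases r) auto
  have base: "a < length A" "b < length B" "A ! a = B ! b" using Suc.prems wins_letters by auto
  show ?case
  proof (cases \<pi>')
    case Nil
    then show ?thesis using base by (simp add: wins_Nil)
  next
    case (Cons T' \<rho>')
    from Suc.prems(3)[unfolded Cons] obtain T \<rho> where
      \<pi>: "\<pi> = T # \<rho>" and T: "\<And>a a'. allowed T' a a' \<Longrightarrow> allowed T a a'" and \<rho>: "pattern_weaker \<rho>' \<rho>"
      by (rule pattern_weaker_ConsD) blast+
    show ?thesis unfolding Cons
    proof (rule wins_SucI[OF base])
      fix a' assume "a' < length A" "allowed T' a a'"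
      then obtain b' where "b' < length B" "same_order a a' b b'" "wins \<pi> r0 A B a' b'"
        using wins_Suc_same[of \<pi> r0 A B a b a'] Suc.prems(1) r0 \<pi> T by auto
      then show "\<exists>b'<length B. same_order a a' b b' \<and> wins (T' # \<rho>') r' A B a' b'"
        using Suc.IH r0 Suc.prems(3) Cons by blast
    next
      fix T2' \<rho>2' b' assume \<rho>': "\<rho>' = T2' # \<rho>2'" and b': "b' < length B" "allowed T2' b b'"
      from \<rho>[unfolded \<rho>'] obtain T2 \<rho>2 where
        "\<rho> = T2 # \<rho>2" "\<And>a a'. allowed T2' a a' \<Longrightarrow> allowed T2 a a'"
        by (rule pattern_weaker_ConsD) blast+
      then obtain a' where "a' < length A" "same_order b b' a a'" "wins \<rho> r0 B A b' a'"
        using wins_Suc_switch[of T \<rho> r0 A B a b b'] Suc.prems(1) \<pi> r0 b' by auto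
      then show "\<exists>a'<length A. same_order b b' a a' \<and> wins \<rho>' r' B A b' a'"
        using Suc.IH r0 \<rho> by blast
    qed
  qed
qed

lemma wins_swap:
  assumes W: "wins (Free # T # \<rho>) r A B a b" and weaker: "pattern_weaker \<rho> (Free # T # \<rho>)"
  shows "wins (T # \<rho>) r B A b a"
proof (cases r)
  case 0
  then show ?thesis using W by auto
next
  case (Suc r0)
  have base: "a < length A" "b < length B" "A ! a = B ! b" using W wins_letters by auto
  show ?thesis unfolding Suc
  proof (rule wins_SucI)
    fix b' assume "b' < length B" "allowed T b b'"
    then show "\<exists>a'<length A. same_order b b' a a' \<and> wins (T # \<rho>) r0 B A b' a'"
      using wins_Suc_switch[of Free "T # \<rho>" r0 A B a b b'] W Suc by auto
  next
    fix T' \<rho>' a' assume "\<rho> = T' # \<rho>'" "a' < length A"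
    then obtain b' where "b' < length B" "same_order a a' b b'" "wins (Free # T # \<rho>) r0 A B a' b'"
      using wins_Suc_same[of "Free # T # \<rho>" r0 A B a b a'] W Suc by auto
    then show "\<exists>b'<length B. same_order a a' b b' \<and> wins \<rho> r0 A B a' b'"
      using wins_mono weaker by blast
  qed (use base in auto)
qed

abbreviation free_then :: "nat \<Rightarrow> move \<Rightarrow> move list" where
  "free_then i T \<equiv> replicate i Free @ [T]"

lemma wins_free_then_swap: "wins (free_then (Suc i) T) r A B a b \<Longrightarrow> wins (free_then i T) r B A b a"
proof (cases i)
  case 0
  then show "wins (free_then (Suc i) T) r A B a b \<Longrightarrow> ?thesis"
    using wins_swap[of T "[]"] by (simp add: pattern_weaker_def)
next
  case (Suc i')
  have "pattern_weaker (free_then i' T) (free_then (Suc (Suc i')) T)"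
    by (rule pattern_weaker_replicate_Free) auto
  then show "wins (free_then (Suc i) T) r A B a b \<Longrightarrow> ?thesis"
    using wins_swap[of Free "free_then i' T"] Suc by simp
qed

fun mirror :: "move \<Rightarrow> move" where
  "mirror Free = Free"
| "mirror Left = Right"
| "mirror Right = Left"

lemma allowed_mirror:
  "a < N \<Longrightarrow> a' < N \<Longrightarrow> allowed (mirror T) (N - Suc a) (N - Suc a') \<longleftrightarrow> allowed T a a'"
  by (cases T) auto

lemma same_order_rev:
  assumes "a < N" "a' < N" "b < M" "b' < M"
  shows "same_order (N - Suc a) (N - Suc a') (M - Suc b) (M - Suc b') \<longleftrightarrow> same_order a a' b b'"
proof -
  have rev_less: "x < K \<Longrightarrow> y < K \<Longrightarrow> K - Suc x < K - Suc y \<longleftrightarrow> y < x" for x y K :: nat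
    by arith
  show ?thesis using assms by (auto simp: same_order_def rev_less)
qed

lemma wins_rev:
  "wins \<pi> r A B a b \<Longrightarrow>
   wins (map mirror \<pi>) r (rev A) (rev B) (length A - Suc a) (length B - Suc b)"
proof (induction r arbitrary: \<pi> A B a b)
  case 0
  then show ?case by (auto simp: rev_nth)
next
  case (Suc r)
  have base: "a < length A" "b < length B" "A ! a = B ! b" using Suc.prems wins_letters by auto
  then have base': "length A - Suc a < length (rev A)" "length B - Suc b < length (rev B)"
    "rev A ! (length A - Suc a) = rev B ! (length B - Suc b)" by (auto simp: rev_nth)
  show ?case
  proof (cases \<pi>)
    case Nil
    then show ?thesis using base' by (simp add: wins_Nil)
  next
    case (Cons T \<rho>)
    show ?thesis unfolding Cons list.map
    proof (rule wins_SucI[OF base'])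
      fix a2 assume a2: "a2 < length (rev A)" "allowed (mirror T) (length A - Suc a) a2"
      define a' where "a' = length A - Suc a2"
      have a2_eq: "a2 = length A - Suc a'" and a': "a' < length A" using a2 by (auto simp: a'_def)
      moreover have "allowed T a a'"
        using a2 a2_eq a' base allowed_mirror[of a "length A" a' T] by auto
      ultimately obtain b' where
        b': "b' < length B" "same_order a a' b b'" "wins (T # \<rho>) r A B a' b'"
        using wins_Suc_same[of "T # \<rho>" r A B a b a'] Suc.prems Cons by auto
      then show "\<exists>b2<length (rev B). same_order (length A - Suc a) a2 (length B - Suc b) b2 \<and>
                   wins (mirror T # map mirror \<rho>) r (rev A) (rev B) a2 b2"
        using Suc.IH[OF b'(3)] a2_eq a' base same_order_rev
        by (intro exI[of _ "length B - Suc b'"]) auto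
    next
      fix T2 \<rho>2 b2 assume b2: "map mirror \<rho> = T2 # \<rho>2" "b2 < length (rev B)"
        "allowed T2 (length B - Suc b) b2"
      obtain T1 \<rho>1 where \<rho>: "\<rho> = T1 # \<rho>1" "T2 = mirror T1" using b2(1) by (cases \<rho>) auto
      define b' where "b' = length B - Suc b2"
      have b2_eq: "b2 = length B - Suc b'" and b': "b' < length B" using b2 by (auto simp: b'_def)
      moreover have "allowed T1 b b'"
        using b2 b2_eq b' \<rho> base allowed_mirror[of b "length B" b' T1] by auto
      ultimately obtain a' where a': "a' < length A" "same_order b b' a a'" "wins \<rho> r B A b' a'"
        using wins_Suc_switch[of T \<rho> r A B a b b'] Suc.prems Cons \<rho> by auto
      then show "\<exists>a2<length (rev A). same_order (length B - Suc b) b2 (length A - Suc a) a2 \<and>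
                   wins (map mirror \<rho>) r (rev B) (rev A) b2 a2"
        using Suc.IH[OF a'(3)] b2_eq b' base same_order_rev
        by (intro exI[of _ "length A - Suc a'"]) auto
    qed
  qed
qed

definition wins_all :: "move list \<Rightarrow> nat \<Rightarrow> nat list \<Rightarrow> nat list \<Rightarrow> bool" where
  "wins_all \<pi> r A B \<longleftrightarrow> (\<forall>a<length A. \<exists>b<length B. wins \<pi> r A B a b)"

lemma wins_all_mono: "wins_all \<pi> r A B \<Longrightarrow> pattern_weaker \<pi>' \<pi> \<Longrightarrow> wins_all \<pi>' r A B"
  unfolding wins_all_def using wins_mono[OF _ le_refl] by blast

lemma wins_all_rev: "wins_all \<pi> r A B \<Longrightarrow> wins_all (map mirror \<pi>) r (rev A) (rev B)"
  unfolding wins_all_def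
proof (intro allI impI)
  fix a2 assume W: "\<forall>a<length A. \<exists>b<length B. wins \<pi> r A B a b" and a2: "a2 < length (rev A)"
  define a where "a = length A - Suc a2"
  have "a < length A" "a2 = length A - Suc a" using a2 by (auto simp: a_def)
  moreover obtain b where "b < length B" "wins \<pi> r A B a b" using W \<open>a < length A\<close> by blast
  ultimately show "\<exists>b2<length (rev B). wins (map mirror \<pi>) r (rev A) (rev B) a2 b2"
    using wins_rev by (intro exI[of _ "length B - Suc b"]) auto
qed

section \<open>Prefixing a power of a word\<close>

definition block_equiv :: "move \<Rightarrow> nat \<Rightarrow> nat \<Rightarrow> nat list \<Rightarrow> nat list \<Rightarrow> bool" where
  "block_equiv T j n u v \<longleftrightarrow>
     (\<forall>i\<le>j. \<forall>r<n. wins_all (free_then i T) r u v \<and> wins_all (free_then i T) r v u)"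

lemma block_equiv_sym: "block_equiv T j n u v \<longleftrightarrow> block_equiv T j n v u"
  by (auto simp: block_equiv_def)

lemma block_equiv_rev: "block_equiv T j n u v \<Longrightarrow> block_equiv (mirror T) j n (rev u) (rev v)"
  using wins_all_rev[of "free_then _ T"] by (simp add: block_equiv_def)

lemma nth_concat_replicate:
  "d < n * length p \<Longrightarrow> concat (replicate n p) ! d = p ! (d mod length p)"
proof (induction n arbitrary: d)
  case (Suc n)
  show ?case
  proof (cases "d < length p")
    case False
    then have "concat (replicate (Suc n) p) ! d = p ! ((d - length p) mod length p)"
      using Suc by (simp add: nth_append)
    also have "(d - length p) mod length p = d mod length p"
      using False le_mod_geq by auto
    finally show ?thesis .
  qed (simp add: nth_append)
qed simp

locale power_prefix =
  fixes p :: "nat list" and n :: nat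
begin

definition P :: "nat list" where
  "P = concat (replicate n p)"

lemma length_P: "length P = n * length p"
  by (simp add: P_def length_concat sum_list_replicate)

lemma nth_P:
  assumes "d < length P"
  shows "P ! d = p ! (d mod length p)" and "d div length p < n" and "0 < length p"
proof -
  show lp: "0 < length p" using assms length_P by (metis gr0I less_nat_zero_code mult_0_right)
  show "d div length p < n" using assms length_P lp by (simp add: less_mult_imp_div_less)
  show "P ! d = p ! (d mod length p)" using nth_concat_replicate assms length_P by (simp add: P_def)
qed

lemma nth_append_P_in_set:
  "k < length P + length x \<Longrightarrow> set x \<subseteq> set p \<Longrightarrow> (P @ x) ! k \<in> set p"
  using nth_mem[of k P] nth_mem[of "k - length P" x] by (auto simp: nth_append P_def)

lemma letter_in_copy:
  assumes "t < n" and "c \<in> set p"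
  obtains e where "e < length P" "e div length p = t" "P ! e = c"
proof -
  obtain q where q: "q < length p" "p ! q = c" using assms(2) by (auto simp: in_set_conv_nth)
  define e where "e = q + t * length p"
  have "e < Suc t * length p" using q by (simp add: e_def)
  also have "\<dots> \<le> length P" using assms(1) length_P by (simp del: mult_Suc)
  finally have e: "e < length P" .
  moreover have "e div length p = t" "e mod length p = q"
    using q by (auto simp: e_def div_add1_eq)
  moreover have "P ! e = c" using nth_P(1)[OF e] q \<open>e mod length p = q\<close> by simp
  ultimately show thesis using that by blast
qed

lemma letter_in_previous_copy:
  assumes "d < length P" "1 \<le> d div length p" "c \<in> set p"
  obtains e where "e < d" "e div length p = d div length p - 1" "P ! e = c"
proof -
  have "d div length p - 1 < n" using nth_P(2)[OF assms(1)] by linarith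
  then obtain e where e: "e < length P" "e div length p = d div length p - 1" "P ! e = c"
    using letter_in_copy assms(3) by blast
  have "e < d"
  proof (rule ccontr)
    assume "\<not> e < d"
    then have "d div length p \<le> e div length p" by (simp add: div_le_mono)
    then show False using e(2) assms(2) by linarith
  qed
  then show thesis using that e by blast
qed

text \<open>Configurations of a pebble pair \<open>(a, d)\<close> on \<open>P @ X1\<close> and \<open>P @ X2\<close> from which
  Duplicator wins the game with pattern \<open>free_then i Left\<close> and \<open>r\<close> rounds: the pebbles are
  aligned in the common prefix; or both lie in the suffixes and Duplicator wins there with
  pattern \<open>free_then (i - 1) Right\<close>; or, with at most one free block left, Duplicator lags
  behind in the prefix with at least \<open>r\<close> copies of \<open>p\<close> to spare on the left; or, with only
  leftward moves left, Duplicator is ahead of Spoiler's pebble in the prefix.\<close>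
definition config :: "nat \<Rightarrow> nat \<Rightarrow> nat list \<Rightarrow> nat list \<Rightarrow> nat \<Rightarrow> nat \<Rightarrow> bool" where
  "config i r X1 X2 a d \<longleftrightarrow>
     a < length P + length X1 \<and> d < length P + length X2 \<and> (P @ X1) ! a = (P @ X2) ! d \<and> r \<le> n \<and>
     (a = d \<and> a < length P
      \<or> length P \<le> a \<and> length P \<le> d \<and>
        (i = 0 \<or> wins (free_then (i - 1) Right) r X1 X2 (a - length P) (d - length P))
      \<or> i \<le> 1 \<and> d < length P \<and> d < a \<and> r \<le> d div length p
      \<or> i = 0 \<and> a < length P \<and> a < d)"

lemma config_aligned: "a < length P \<Longrightarrow> r \<le> n \<Longrightarrow> config i r X1 X2 a a"
  by (auto simp: config_def nth_append)

lemma config_suffix: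
  "length P \<le> a \<Longrightarrow> length P \<le> d \<Longrightarrow> r \<le> n \<Longrightarrow>
   wins (free_then (i - 1) Right) r X1 X2 (a - length P) (d - length P) \<Longrightarrow> config i r X1 X2 a d"
  using wins_letters[of "free_then (i - 1) Right" r X1 X2 "a - length P" "d - length P"]
  by (auto simp: config_def nth_append)

lemma config_behind:
  "i \<le> 1 \<Longrightarrow> d < a \<Longrightarrow> a < length P + length X1 \<Longrightarrow> d < length P \<Longrightarrow> (P @ X1) ! a = P ! d \<Longrightarrow>
   r \<le> d div length p \<Longrightarrow> r \<le> n \<Longrightarrow> config i r X1 X2 a d"
  by (auto simp: config_def nth_append)

lemma config_ahead:
  "a < d \<Longrightarrow> a < length P \<Longrightarrow> d < length P + length X2 \<Longrightarrow> P ! a = (P @ X2) ! d \<Longrightarrow> r \<le> n \<Longrightarrow>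
   config 0 r X1 X2 a d"
  by (auto simp: config_def nth_append)

lemma config_swap: "config (Suc i) r X1 X2 a d \<Longrightarrow> config i r X2 X1 d a"
  using wins_free_then_swap[of "i - 1" Right r X1 X2 "a - length P" "d - length P"]
  by (cases i) (auto simp: config_def)

lemma jump_into_last_copy:
  assumes "set X1 \<subseteq> set p" "i \<le> 1" "r < n" "length P \<le> a" "a < length P + length X1"
  shows "\<exists>e<length P. config i r X1 X2 a e"
proof -
  obtain e where e: "e < length P" "e div length p = n - 1" "P ! e = (P @ X1) ! a"
    using letter_in_copy[of "n - 1"] nth_append_P_in_set[OF assms(5,1)] assms(3) by auto
  then have "config i r X1 X2 a e" using assms by (intro config_behind) auto
  with e show ?thesis by blast
qed

context
  fixes j :: nat and X1 X2 :: "nat list"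
  assumes equiv: "block_equiv Right j n X1 X2"
begin

lemma jump_into_suffix:
  assumes "0 < i" "i \<le> Suc j" "r < n" "length P \<le> a" "a < length P + length X1"
  shows "\<exists>d. length P \<le> d \<and> d < length P + length X2 \<and> config i r X1 X2 a d"
proof -
  have "wins_all (free_then (i - 1) Right) r X1 X2" using equiv assms by (simp add: block_equiv_def)
  moreover have "a - length P < length X1" using assms by linarith
  ultimately obtain q where
    q: "q < length X2" "wins (free_then (i - 1) Right) r X1 X2 (a - length P) q"
    unfolding wins_all_def by blast
  then have "config i r X1 X2 a (length P + q)" using assms by (intro config_suffix) auto
  with q show ?thesis by (intro exI[of _ "length P + q"]) auto
qed

context
  fixes i r a a' :: nat
  assumes letters: "set X1 \<subseteq> set p" and i: "i \<le> Suc j" and r: "Suc r \<le> n"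
    and a': "a' < length P + length X1" "allowed (if i = 0 then Left else Free) a a'"
begin

lemma answer_aligned:
  assumes "a = d" "a < length P"
  shows "\<exists>d'<length P + length X2. same_order a a' d d' \<and> config i r X1 X2 a' d'"
proof (cases "a' < length P")
  case True
  then show ?thesis using config_aligned[of a' r i X1 X2] r assms by (intro exI[of _ a']) auto
next
  case False
  then have "0 < i" using assms a' by (cases i) auto
  then obtain d' where "length P \<le> d'" "d' < length P + length X2" "config i r X1 X2 a' d'"
    using jump_into_suffix[of i r a'] False i r a' by auto
  then show ?thesis using assms False by (intro exI[of _ d']) (auto simp: same_order_def)
qed

lemma answer_suffix:
  assumes "length P \<le> a" "length P \<le> d" "d < length P + length X2" "(P @ X1) ! a = (P @ X2) ! d"
    and W: "i = 0 \<or> wins (free_then (i - 1) Right) (Suc r) X1 X2 (a - length P) (d - length P)"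
  shows "\<exists>d'<length P + length X2. same_order a a' d d' \<and> config i r X1 X2 a' d'"
proof -
  let ?L = "length P"
  have "a' < ?L \<or> ?L \<le> a' \<and> 0 < i \<and> allowed (hd (free_then (i - 1) Right)) (a - ?L) (a' - ?L)
      \<or> a' = a \<and> i = 0 \<or> ?L \<le> a' \<and> a' < a \<and> i \<le> 1"
  proof -
    have "hd (free_then (i - 1) Right) = (if i = 1 then Right else Free)" if "0 < i"
      using that by (cases "i - 1") auto
    then show ?thesis using a'(2) assms(1) by (cases "i = 0"; cases "i = 1") auto
  qed
  then consider "a' < ?L"
    | "?L \<le> a'" "0 < i" "allowed (hd (free_then (i - 1) Right)) (a - ?L) (a' - ?L)"
    | "a' = a" "i = 0"
    | "?L \<le> a'" "a' < a" "i \<le> 1"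
    by blast
  then show ?thesis
  proof cases
    case 1
    then show ?thesis using config_aligned[of a' r i X1 X2] r assms
      by (intro exI[of _ a']) (auto simp: same_order_def)
  next
    case 2
    then have "wins (free_then (i - 1) Right) (Suc r) X1 X2 (a - ?L) (d - ?L)" using W by simp
    moreover have "a' - ?L < length X1" using a'(1) 2 by linarith
    ultimately obtain q where q: "q < length X2" "same_order (a - ?L) (a' - ?L) (d - ?L) q"
        "wins (free_then (i - 1) Right) r X1 X2 (a' - ?L) q"
      using wins_Suc_same 2(3) by blast
    then have "config i r X1 X2 a' (?L + q)" using 2 r by (intro config_suffix) auto
    moreover have "same_order a a' d (?L + q)"
      using same_order_shift[of a ?L a' d ?L "?L + q"] q assms 2 by auto
    ultimately show ?thesis using q by (intro exI[of _ "?L + q"]) auto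
  next
    case 3
    then have "config i r X1 X2 a' d" using assms a' r by (auto simp: config_def)
    then show ?thesis using 3 assms by (intro exI[of _ d]) auto
  next
    case 4
    then obtain e where "e < ?L" "config i r X1 X2 a' e"
      using jump_into_last_copy[OF letters, of i r a'] assms r a' by auto
    then show ?thesis using 4 assms by (intro exI[of _ e]) (auto simp: same_order_def)
  qed
qed

lemma answer_behind:
  assumes "i \<le> 1" "d < length P" "d < a" "Suc r \<le> d div length p"
    "a < length P + length X1" "(P @ X1) ! a = (P @ X2) ! d"
  shows "\<exists>d'<length P + length X2. same_order a a' d d' \<and> config i r X1 X2 a' d'"
proof -
  let ?L = "length P"
  consider "a' < d" | "d \<le> a'" "a' < a" | "a' = a" | "a < a'" by linarith
  then show ?thesis
  proof cases
    case 1
    then show ?thesis using config_aligned[of a' r i X1 X2] r assms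
      by (intro exI[of _ a']) (auto simp: same_order_def)
  next
    case 2
    obtain e where e: "e < d" "e div length p = d div length p - 1" "P ! e = (P @ X1) ! a'"
      using letter_in_previous_copy[of d "(P @ X1) ! a'"] nth_append_P_in_set[OF a'(1) letters] assms
      by auto
    then have "config i r X1 X2 a' e" using 2 assms a' r by (intro config_behind) auto
    then show ?thesis using e 2 assms by (intro exI[of _ e]) (auto simp: same_order_def)
  next
    case 3
    have "config i r X1 X2 a d" using assms r by (intro config_behind) (auto simp: nth_append)
    then show ?thesis using 3 assms by (intro exI[of _ d]) auto
  next
    case 4
    then have "i = 1" using assms a'(2) by (cases i) auto
    show ?thesis
    proof (cases "a' < ?L")
      case True
      then show ?thesis using config_aligned[of a' r i X1 X2] r assms 4
        by (intro exI[of _ a']) (auto simp: same_order_def)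
    next
      case False
      then obtain d' where "?L \<le> d'" "d' < ?L + length X2" "config i r X1 X2 a' d'"
        using jump_into_suffix[of i r a'] \<open>i = 1\<close> i r a' by auto
      then show ?thesis using assms 4 by (intro exI[of _ d']) (auto simp: same_order_def)
    qed
  qed
qed

lemma answer_ahead:
  assumes "i = 0" "a < length P" "a < d" "d < length P + length X2" "(P @ X1) ! a = (P @ X2) ! d"
  shows "\<exists>d'<length P + length X2. same_order a a' d d' \<and> config i r X1 X2 a' d'"
proof (cases "a' = a")
  case True
  have "config 0 r X1 X2 a d" using assms r by (intro config_ahead) (auto simp: nth_append)
  then show ?thesis using True assms by (intro exI[of _ d]) auto
next
  case False
  then have "a' < a" using assms a'(2) by auto
  then show ?thesis using config_aligned[of a' r i X1 X2] r assms
    by (intro exI[of _ a']) (auto simp: same_order_def)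
qed

lemma answer:
  assumes "config i (Suc r) X1 X2 a d"
  shows "\<exists>d'<length P + length X2. same_order a a' d d' \<and> config i r X1 X2 a' d'"
proof -
  have base: "d < length P + length X2" "(P @ X1) ! a = (P @ X2) ! d"
    using assms by (simp_all add: config_def)
  consider "a = d" "a < length P"
    | "length P \<le> a" "length P \<le> d"
      "i = 0 \<or> wins (free_then (i - 1) Right) (Suc r) X1 X2 (a - length P) (d - length P)"
    | "i \<le> 1" "d < length P" "d < a" "Suc r \<le> d div length p" "a < length P + length X1"
    | "i = 0" "a < length P" "a < d"
    using assms unfolding config_def by blast
  then show ?thesis
  proof cases
    case 1
    then show ?thesis by (rule answer_aligned)
  next
    case 2
    then show ?thesis using answer_suffix[OF 2(1,2) base 2(3)] by blast
  next
    case 3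
    then show ?thesis using answer_behind[OF 3 base(2)] by blast
  next
    case 4
    then show ?thesis using answer_ahead[OF 4 base] by blast
  qed
qed

end

end

lemma config_wins:
  assumes "config i r X1 X2 a d" "i \<le> Suc j" "block_equiv Right j n X1 X2"
    "set X1 \<subseteq> set p" "set X2 \<subseteq> set p"
  shows "wins (free_then i Left) r (P @ X1) (P @ X2) a d"
  using assms
proof (induction r arbitrary: i X1 X2 a d)
  case 0
  then show ?case by (auto simp: config_def)
next
  case (Suc r)
  note C = Suc.prems(1) and equiv = Suc.prems(3) and letters = Suc.prems(4,5)
  have base: "a < length (P @ X1)" "d < length (P @ X2)" "(P @ X1) ! a = (P @ X2) ! d"
    using C by (auto simp: config_def)
  have rounds: "Suc r \<le> n" using C by (simp add: config_def)
  have same: "\<exists>d'<length (P @ X2).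
      same_order a a' d d' \<and> wins (free_then i Left) r (P @ X1) (P @ X2) a' d'"
    if "a' < length (P @ X1)" "allowed (if i = 0 then Left else Free) a a'" for a'
    using answer[OF equiv letters(1) Suc.prems(2) rounds _ _ C] Suc.IH[of i X1 X2 a'] Suc.prems that
    by fastforce
  show ?case
  proof (cases i)
    case 0
    have "wins [Left] (Suc r) (P @ X1) (P @ X2) a d"
      by (rule wins_SucI[OF base]) (use same 0 in auto)
    then show ?thesis using 0 by simp
  next
    case (Suc i')
    have C': "config i' (Suc r) X2 X1 d a" using C Suc config_swap by simp
    have equiv': "block_equiv Right j n X2 X1" using equiv block_equiv_sym by blast
    have switch: "\<exists>a'<length (P @ X1).
        same_order d d' a a' \<and> wins (free_then i' Left) r (P @ X2) (P @ X1) d' a'"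
      if "d' < length (P @ X2)" "allowed (if i' = 0 then Left else Free) d d'" for d'
      using answer[OF equiv' letters(2) _ rounds _ _ C'] Suc.IH[of i' X2 X1 d'] Suc.prems Suc
        equiv' that
      by fastforce
    show ?thesis unfolding Suc replicate_Suc append_Cons
    proof (rule wins_SucI[OF base])
      fix a' assume "a' < length (P @ X1)" "allowed Free a a'"
      then show "\<exists>d'<length (P @ X2).
          same_order a a' d d' \<and> wins (Free # free_then i' Left) r (P @ X1) (P @ X2) a' d'"
        using same Suc by auto
    next
      fix T' \<rho>' d' assume "free_then i' Left = T' # \<rho>'" "d' < length (P @ X2)" "allowed T' d d'"
      then show "\<exists>a'<length (P @ X1).
          same_order d d' a a' \<and> wins (free_then i' Left) r (P @ X2) (P @ X1) d' a'"
        using switch by (cases i') auto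
    qed
  qed
qed

lemma wins_all_prefix:
  assumes "block_equiv Right j n X1 X2" "set X1 \<subseteq> set p" "set X2 \<subseteq> set p" "i \<le> Suc j" "r < n"
  shows "wins_all (free_then i Left) r (P @ X1) (P @ X2)"
  unfolding wins_all_def
proof (intro allI impI)
  fix a assume a: "a < length (P @ X1)"
  have "\<exists>d<length (P @ X2). config i r X1 X2 a d"
  proof (cases "a < length P")
    case True
    then show ?thesis using config_aligned[of a r i X1 X2] assms by (intro exI[of _ a]) auto
  next
    case False
    have "length P \<le> a" "a < length P + length X1" using False a by auto
    then show ?thesis
    proof (cases "i = 0")
      case True
      then obtain e where "e < length P" "config i r X1 X2 a e"
        using jump_into_last_copy[OF assms(2), of i r a X2] assms \<open>length P \<le> a\<close> a by auto
      then show ?thesis by (intro exI[of _ e]) auto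
    next
      case False
      then show ?thesis using jump_into_suffix[OF assms(1), of i r a] assms \<open>length P \<le> a\<close> a
        by auto
    qed
  qed
  then show "\<exists>d<length (P @ X2). wins (free_then i Left) r (P @ X1) (P @ X2) a d"
    using config_wins assms by blast
qed

end

lemma block_equiv_prefix:
  assumes "block_equiv Right j n x y" "set x \<subseteq> set p" "set y \<subseteq> set p"
  shows "block_equiv Left (Suc j) n (concat (replicate n p) @ x) (concat (replicate n p) @ y)"
  using power_prefix.wins_all_prefix[of j n x y p] power_prefix.wins_all_prefix[of j n y x p] assms
  unfolding block_equiv_def power_prefix.P_def by (metis block_equiv_sym)

section \<open>The words u and v\<close>

lemma uw_2: "uw 2 n = 0 # vw 2 n"
  by (simp add: numeral_2_eq_2)

lemma length_vw_2: "length (vw 2 n) = 4 * n"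
  by (simp add: numeral_2_eq_2 length_concat sum_list_replicate)

lemma length_uw_2: "length (uw 2 n) = Suc (4 * n)"
  by (simp add: uw_2 length_vw_2)

lemma nth_vw_2: "i < 4 * n \<Longrightarrow> vw 2 n ! i = (if even i then 1 else 0)"
proof -
  assume i: "i < 4 * n"
  have "vw 2 n ! i = [1, 0] ! (i mod 2)"
    using nth_concat_replicate[of i "2 * n" "[1, 0 :: nat]"] i by (simp add: numeral_2_eq_2)
  then show ?thesis by (cases "even i") (auto simp: even_iff_mod_2_eq_zero odd_iff_mod_2_eq_one)
qed

lemma nth_uw_2: "i \<le> 4 * n \<Longrightarrow> uw 2 n ! i = (if even i then 0 else 1)"
  using nth_vw_2[of "i - 1" n] by (cases i) (auto simp: uw_2)

lemma nth_uw_2_eq_nth_vw_2: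
  "i \<le> 4 * n \<Longrightarrow> j < 4 * n \<Longrightarrow> i = Suc j \<or> Suc i = j \<Longrightarrow> uw 2 n ! i = vw 2 n ! j"
  using nth_uw_2 nth_vw_2 by auto

lemma wins_Right_uw_vw_2: "j < 4 * n \<Longrightarrow> wins [Right] r (uw 2 n) (vw 2 n) (Suc j) j"
proof (induction r arbitrary: j)
  case 0
  then show ?case using nth_uw_2_eq_nth_vw_2 length_uw_2 length_vw_2 by auto
next
  case (Suc r)
  show ?case
  proof (rule wins_SucI)
    fix a' assume "a' < length (uw 2 n)" "allowed Right (Suc j) a'"
    then show "\<exists>b'<length (vw 2 n).
        same_order (Suc j) a' j b' \<and> wins [Right] r (uw 2 n) (vw 2 n) a' b'"
      using Suc.IH[of "a' - 1"] length_uw_2 length_vw_2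
      by (intro exI[of _ "a' - 1"]) (auto simp: same_order_def)
  qed (use Suc.prems nth_uw_2_eq_nth_vw_2 length_uw_2 length_vw_2 in auto)
qed

lemma wins_Right_vw_uw_2:
  "j < 4 * n \<Longrightarrow> i \<le> 4 * n \<Longrightarrow> i = Suc j \<or> Suc i = j \<Longrightarrow> wins [Right] r (vw 2 n) (uw 2 n) j i"
proof (induction r arbitrary: i j)
  case 0
  then show ?case using nth_uw_2_eq_nth_vw_2 length_uw_2 length_vw_2 by auto
next
  case (Suc r)
  show ?case
  proof (rule wins_SucI)
    fix b' assume b': "b' < length (vw 2 n)" "allowed Right j b'"
    define a' where "a' = (if i = Suc j then Suc b' else b' - 1)"
    have "a' \<le> 4 * n" "a' = Suc b' \<or> Suc a' = b'" "same_order j b' i a'"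
      using b' Suc.prems length_vw_2 by (auto simp: a'_def same_order_def)
    then show "\<exists>a''<length (uw 2 n).
        same_order j b' i a'' \<and> wins [Right] r (vw 2 n) (uw 2 n) b' a''"
      using Suc.IH[of b' a'] b' length_vw_2 length_uw_2 by (intro exI[of _ a']) auto
  qed (use Suc.prems nth_uw_2_eq_nth_vw_2 length_uw_2 length_vw_2 in auto)
qed

lemma wins_Free_Right_vw_uw_2: "j < 4 * n \<Longrightarrow> wins [Free, Right] r (vw 2 n) (uw 2 n) j (Suc j)"
proof (induction r arbitrary: j)
  case 0
  then show ?case using nth_uw_2_eq_nth_vw_2 length_uw_2 length_vw_2 by auto
next
  case (Suc r)
  show ?case
  proof (rule wins_SucI)
    fix b' assume "b' < length (vw 2 n)" "allowed Free j b'"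
    then show "\<exists>a'<length (uw 2 n).
        same_order j b' (Suc j) a' \<and> wins [Free, Right] r (vw 2 n) (uw 2 n) b' a'"
      using Suc.IH[of b'] length_vw_2 length_uw_2
      by (intro exI[of _ "Suc b'"]) (auto simp: same_order_def)
  next
    fix T' \<rho>' a' assume "[Right] = T' # \<rho>'" "a' < length (uw 2 n)" "allowed T' (Suc j) a'"
    then show "\<exists>b'<length (vw 2 n).
        same_order (Suc j) a' j b' \<and> wins [Right] r (uw 2 n) (vw 2 n) a' b'"
      using wins_Right_uw_vw_2[of "a' - 1" n r] length_uw_2 length_vw_2
      by (intro exI[of _ "a' - 1"]) (auto simp: same_order_def)
  qed (use Suc.prems nth_uw_2_eq_nth_vw_2 length_uw_2 length_vw_2 in auto)
qed

text \<open>Duplicator keeps her pebble in \<open>vw 2 n\<close> next to Spoiler's pebble in \<open>uw 2 n\<close>, on the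
  side where at least \<open>2 r\<close> letters remain, so that the \<open>r\<close> remaining moves cannot reach
  the end of \<open>vw 2 n\<close>, which is one letter shorter.\<close>
definition adjacent_pair :: "nat \<Rightarrow> nat \<Rightarrow> nat \<Rightarrow> nat \<Rightarrow> bool" where
  "adjacent_pair n r i j \<longleftrightarrow> i \<le> 4 * n \<and> j < 4 * n \<and> r < n \<and>
     (i = Suc j \<and> 2 * r < i \<or> j = Suc i \<and> i + 2 * r + 2 \<le> 4 * n)"

lemma adjacent_pair_answer:
  assumes "adjacent_pair n (Suc r) i j" "i' \<le> 4 * n"
  shows "\<exists>j'. same_order i i' j j' \<and> adjacent_pair n r i' j'"
proof -
  consider "i' = i" | "i' < i" "2 * r < i'" | "i' < i" "i' \<le> 2 * r" "i = Suc j"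
    | "i' < i" "j = Suc i" | "i < i'" "i' + 2 * r + 2 \<le> 4 * n" | "i < i'" "\<not> i' + 2 * r + 2 \<le> 4 * n"
    using assms(1) unfolding adjacent_pair_def by linarith
  then show ?thesis
  proof cases
    case 1
    then show ?thesis using assms by (intro exI[of _ j]) (auto simp: adjacent_pair_def)
  next
    case 2
    then show ?thesis using assms
      by (intro exI[of _ "i' - 1"]) (auto simp: adjacent_pair_def same_order_def)
  next
    case 3
    then show ?thesis using assms
      by (intro exI[of _ "Suc i'"]) (auto simp: adjacent_pair_def same_order_def)
  next
    case 4
    then show ?thesis using assms
      by (intro exI[of _ "Suc i'"]) (auto simp: adjacent_pair_def same_order_def)
  next
    case 5
    then show ?thesis using assms
      by (intro exI[of _ "Suc i'"]) (auto simp: adjacent_pair_def same_order_def)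
  next
    case 6
    then show ?thesis using assms
      by (intro exI[of _ "i' - 1"]) (auto simp: adjacent_pair_def same_order_def)
  qed
qed

lemma wins_Free_Right_uw_vw_2: "adjacent_pair n r i j \<Longrightarrow> wins [Free, Right] r (uw 2 n) (vw 2 n) i j"
proof (induction r arbitrary: i j)
  case 0
  then show ?case using nth_uw_2_eq_nth_vw_2 length_uw_2 length_vw_2 by (auto simp: adjacent_pair_def)
next
  case (Suc r)
  have ij: "i \<le> 4 * n" "j < 4 * n" "i = Suc j \<or> Suc i = j"
    using Suc.prems by (auto simp: adjacent_pair_def)
  show ?case
  proof (rule wins_SucI)
    fix a' assume "a' < length (uw 2 n)" "allowed Free i a'"
    then obtain j' where "same_order i a' j j'" "adjacent_pair n r a' j'"
      using adjacent_pair_answer[OF Suc.prems, of a'] length_uw_2 by auto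
    then show "\<exists>b'<length (vw 2 n).
        same_order i a' j b' \<and> wins [Free, Right] r (uw 2 n) (vw 2 n) a' b'"
      using Suc.IH length_vw_2 by (auto simp: adjacent_pair_def)
  next
    fix T' \<rho>' b' assume b': "[Right] = T' # \<rho>'" "b' < length (vw 2 n)" "allowed T' j b'"
    define a' where "a' = (if i = Suc j then Suc b' else b' - 1)"
    have "a' \<le> 4 * n" "a' = Suc b' \<or> Suc a' = b'" "same_order j b' i a'"
      using b' ij length_vw_2 by (auto simp: a'_def same_order_def)
    then show "\<exists>a''<length (uw 2 n).
        same_order j b' i a'' \<and> wins [Right] r (vw 2 n) (uw 2 n) b' a''"
      using wins_Right_vw_uw_2[of b' n a' r] b' length_vw_2 length_uw_2 by (intro exI[of _ a']) auto
  qed (use ij nth_uw_2_eq_nth_vw_2 length_uw_2 length_vw_2 in auto)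
qed

lemma block_equiv_uw_vw_2: "block_equiv Right 1 n (uw 2 n) (vw 2 n)"
proof -
  have uv: "wins_all [Free, Right] r (uw 2 n) (vw 2 n)" if "r < n" for r
    unfolding wins_all_def
  proof (intro allI impI)
    fix a assume "a < length (uw 2 n)"
    then have "adjacent_pair n r a (if 2 * r < a then a - 1 else Suc a)"
      using that length_uw_2 by (auto simp: adjacent_pair_def)
    then show "\<exists>b<length (vw 2 n). wins [Free, Right] r (uw 2 n) (vw 2 n) a b"
      using wins_Free_Right_uw_vw_2 length_vw_2 by (auto simp: adjacent_pair_def)
  qed
  have vu: "wins_all [Free, Right] r (vw 2 n) (uw 2 n)" for r
    unfolding wins_all_def using wins_Free_Right_vw_uw_2 length_vw_2 length_uw_2
    by (metis Suc_less_eq)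
  have weaker: "pattern_weaker [Right] [Free, Right]"
    using pattern_weaker_replicate_Free[of 0 1 "[Right]"] by simp
  have "wins_all [Right] r x y" if "wins_all [Free, Right] r x y" for r x y
    using that wins_mono[OF _ le_refl weaker] unfolding wins_all_def by blast
  with uv vu show ?thesis by (auto simp: block_equiv_def le_Suc_eq)
qed

lemma
  assumes "3 \<le> m"
  shows uw_odd: "odd m \<Longrightarrow> uw m n = concat (replicate n [0..<m]) @ uw (m - 1) n"
    and vw_odd: "odd m \<Longrightarrow> vw m n = concat (replicate n [0..<m]) @ vw (m - 1) n"
    and uw_even: "even m \<Longrightarrow> uw m n = uw (m - 1) n @ concat (replicate n (rev [0..<m]))"
    and vw_even: "even m \<Longrightarrow> vw m n = vw (m - 1) n @ concat (replicate n (rev [0..<m]))"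
  using assms by (auto simp: eval_nat_numeral dest!: le_Suc_ex)

lemma set_uw_vw: "set (uw m n) \<subseteq> {..<m} \<and> set (vw m n) \<subseteq> {..<m}"
  by (induction m n rule: uw.induct) (auto simp: subset_iff less_Suc_eq)

lemma rev_concat_replicate_rev: "rev (concat (replicate n (rev xs))) = concat (replicate n xs)"
  by (simp add: rev_concat)

lemma block_equiv_uw_vw:
  "2 \<le> m \<Longrightarrow> block_equiv (if even m then Right else Left) (m - 1) n (uw m n) (vw m n)"
proof (induction m rule: nat_less_induct)
  case (1 m)
  show ?case
  proof (cases "m = 2")
    case True
    then show ?thesis using block_equiv_uw_vw_2 by simp
  next
    case False
    with "1.prems" have m: "3 \<le> m" "Suc (m - 2) = m - 1" by auto
    have letters: "set (uw (m - 1) n) \<subseteq> set [0..<m]" "set (vw (m - 1) n) \<subseteq> set [0..<m]"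
      using set_uw_vw[of "m - 1" n] by auto
    show ?thesis
    proof (cases "odd m")
      case True
      then have "even (m - 1)" by (cases m) auto
      then have "block_equiv Right (m - 2) n (uw (m - 1) n) (vw (m - 1) n)"
        using "1.IH"[rule_format, of "m - 1"] m by (simp add: numeral_2_eq_2)
      from block_equiv_prefix[OF this letters] show ?thesis using True m uw_odd vw_odd by simp
    next
      case False
      then have "odd (m - 1)" using m by (cases m) auto
      then have "block_equiv Left (m - 2) n (uw (m - 1) n) (vw (m - 1) n)"
        using "1.IH"[rule_format, of "m - 1"] m by (simp add: numeral_2_eq_2)
      then have "block_equiv Right (m - 2) n (rev (uw (m - 1) n)) (rev (vw (m - 1) n))"
        using block_equiv_rev by fastforce
      from block_equiv_prefix[OF this] letters
      have "block_equiv Left (m - 1) n (concat (replicate n [0..<m]) @ rev (uw (m - 1) n))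
          (concat (replicate n [0..<m]) @ rev (vw (m - 1) n))"
        using m by simp
      moreover have "rev (uw m n) = concat (replicate n [0..<m]) @ rev (uw (m - 1) n)"
        "rev (vw m n) = concat (replicate n [0..<m]) @ rev (vw (m - 1) n)"
        using False m uw_even vw_even rev_concat_replicate_rev by simp_all
      ultimately have "block_equiv Left (m - 1) n (rev (uw m n)) (rev (vw m n))" by simp
      from block_equiv_rev[OF this] show ?thesis using False by simp
    qed
  qed
qed

section \<open>From games to FO2 equivalence\<close>

abbreviation wins_free :: "nat \<Rightarrow> nat \<Rightarrow> nat list \<Rightarrow> nat list \<Rightarrow> nat \<Rightarrow> nat \<Rightarrow> bool" where
  "wins_free k \<equiv> wins (replicate k Free)"

lemma pattern_weaker_replicate_Free_le:
  "k' \<le> k \<Longrightarrow> pattern_weaker (replicate k' Free) (replicate k Free)"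
  using pattern_weaker_replicate_Free[of k' k "[]"] by simp

lemma wins_free_mono: "wins_free k r A B a b \<Longrightarrow> k' \<le> k \<Longrightarrow> r' \<le> r \<Longrightarrow> wins_free k' r' A B a b"
  using wins_mono pattern_weaker_replicate_Free_le by blast

lemma wins_free_Suc_same:
  "wins_free k (Suc r) A B a b \<Longrightarrow> 0 < k \<Longrightarrow> a' < length A \<Longrightarrow>
   \<exists>b'<length B. same_order a a' b b' \<and> wins_free k r A B a' b'"
  using wins_Suc_same[of "replicate k Free"] by simp

lemma wins_free_swap: "wins_free (Suc k) r A B a b \<Longrightarrow> 0 < k \<Longrightarrow> wins_free k r B A b a"
  using wins_free_then_swap[of "k - 1" Free r A B a b]
  by (cases k) (simp_all add: replicate_append_same)

text \<open>Spoiler's first pebble uses up one of the \<open>r\<close> rounds, and placing it in the second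
  word uses up one of the \<open>k\<close> blocks.\<close>
definition opening_wins :: "nat \<Rightarrow> nat \<Rightarrow> nat list \<Rightarrow> nat list \<Rightarrow> bool" where
  "opening_wins k r A B \<longleftrightarrow>
     (\<forall>r'<r. wins_all (replicate k Free) r' A B \<and> (2 \<le> k \<longrightarrow> wins_all (replicate (k - 1) Free) r' B A))"

lemma opening_wins_swap:
  assumes "opening_wins (Suc k) r A B" "0 < k"
  shows "opening_wins k r B A"
  unfolding opening_wins_def
proof (intro allI impI conjI)
  fix r' assume "r' < r"
  then show "wins_all (replicate k Free) r' B A" using assms by (simp add: opening_wins_def)
  have "wins_all (replicate (Suc k) Free) r' A B" using assms \<open>r' < r\<close> by (simp add: opening_wins_def)
  then show "wins_all (replicate (k - 1) Free) r' A B"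
    by (rule wins_all_mono) (rule pattern_weaker_replicate_Free_le, simp)
qed

text \<open>A position of the game for a formula with free variables in \<open>D\<close>: every pebble pair
  must be winning, because a quantifier may rebind either variable, and the new pebble is
  then compared with the other one.\<close>
definition wins_position ::
    "nat \<Rightarrow> nat \<Rightarrow> nat list \<Rightarrow> nat list \<Rightarrow> var set \<Rightarrow> (var \<Rightarrow> nat) \<Rightarrow> (var \<Rightarrow> nat) \<Rightarrow> bool" where
  "wins_position k r A B D s t \<longleftrightarrow> 0 < k \<and> opening_wins k r A B \<and>
     (\<forall>z\<in>D. wins_free k r A B (s z) (t z)) \<and> (\<forall>z\<in>D. \<forall>w\<in>D. s z < s w \<longleftrightarrow> t z < t w)"

lemma var_eq_if_neq: "w \<noteq> z \<Longrightarrow> w' \<noteq> z \<Longrightarrow> w' = (w :: var)"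
  by (cases w; cases w'; cases z) auto

lemma wins_position_Suc_same:
  assumes P: "wins_position k (Suc r) A B D s t" and i: "i < length A"
  shows "\<exists>j<length B. wins_position k r A B (insert z D) (s(z := i)) (t(z := j))"
proof -
  from P have k: "0 < k" and O: "opening_wins k (Suc r) A B"
    and W: "\<And>w. w \<in> D \<Longrightarrow> wins_free k (Suc r) A B (s w) (t w)"
    and ord: "\<And>w w'. w \<in> D \<Longrightarrow> w' \<in> D \<Longrightarrow> s w < s w' \<longleftrightarrow> t w < t w'"
    by (auto simp: wins_position_def)
  obtain j where j: "j < length B" "wins_free k r A B i j"
    and rel: "\<And>w. w \<in> D \<Longrightarrow> w \<noteq> z \<Longrightarrow> same_order (s w) i (t w) j"
  proof (cases "\<exists>w\<in>D. w \<noteq> z")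
    case True
    then obtain w where w: "w \<in> D" "w \<noteq> z" by blast
    obtain j where "j < length B" "same_order (s w) i (t w) j" "wins_free k r A B i j"
      using wins_free_Suc_same[OF W[OF w(1)] k i] by blast
    moreover have "w' = w" if "w' \<noteq> z" for w' using var_eq_if_neq[OF w(2) that] .
    ultimately show thesis using that by blast
  next
    case False
    have "wins_all (replicate k Free) r A B" using O by (simp add: opening_wins_def)
    then obtain j where "j < length B" "wins_free k r A B i j" using i by (auto simp: wins_all_def)
    then show thesis using that False by blast
  qed
  have "opening_wins k r A B" using O by (simp add: opening_wins_def)
  moreover have "wins_free k r A B ((s(z := i)) w) ((t(z := j)) w)" if "w \<in> insert z D" for w
    using that j W[of w] wins_free_mono[of k "Suc r" A B "s w" "t w" k r] by (cases "w = z") auto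
  moreover have "(s(z := i)) w < (s(z := i)) w' \<longleftrightarrow> (t(z := j)) w < (t(z := j)) w'"
    if "w \<in> insert z D" "w' \<in> insert z D" for w w'
    using that ord[of w w'] rel[of w] rel[of w']
    by (cases "w = z"; cases "w' = z") (auto simp: same_order_def)
  ultimately have "wins_position k r A B (insert z D) (s(z := i)) (t(z := j))"
    using k unfolding wins_position_def by blast
  with j show ?thesis by blast
qed

lemma wins_position_swap:
  "wins_position (Suc k) r A B D s t \<Longrightarrow> 0 < k \<Longrightarrow> wins_position k r B A D t s"
  unfolding wins_position_def using opening_wins_swap wins_free_swap by blast

lemma wins_position_letter:
  "wins_position k r A B D s t \<Longrightarrow> z \<in> D \<Longrightarrow> A ! s z = B ! t z"
  unfolding wins_position_def using wins_letters by blast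

lemma wins_position_order:
  assumes "wins_position k r A B D s t" "z \<in> D" "w \<in> D"
  shows "s z < s w \<longleftrightarrow> t z < t w" and "s z = s w \<longleftrightarrow> t z = t w"
  using assms unfolding wins_position_def by (metis linorder_neq_iff)+

lemma blk_flip: "blk (\<not> p) (map_option Not q) f = blk p q f"
proof (induction f arbitrary: p q)
  case (Neg f)
  show ?case using Neg.IH[of "\<not> p" q] by simp
next
  case (Conj f g)
  show ?case using Conj.IH(1)[of p q] Conj.IH(2)[of p q] by simp
next
  case (Disj f g)
  show ?case using Disj.IH(1)[of p q] Disj.IH(2)[of p q] by simp
next
  case (Ex x f)
  have "blk (\<not> p) (Some (\<not> p)) f = blk p (Some p) f" using Ex.IH[of p "Some p"] by simp
  then show ?case by (cases q) auto
next
  case (All x f)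
  have "blk (\<not> p) (Some p) f = blk p (Some (\<not> p)) f" using All.IH[of p "Some (\<not> p)"] by simp
  then show ?case by (cases q) auto
qed simp_all

text \<open>A quantifier that acts existentially is answered in the same word; one that acts
  universally is answered by switching words, which costs a block.\<close>
context
  fixes k r A B D s t z f
  assumes P: "wins_position k (Suc r) A B D s t"
    and IH: "\<And>p k' A' B' s' t'. wins_position k' r A' B' (insert z D) s' t' \<Longrightarrow>
               blk p (Some True) f < k' \<Longrightarrow> sat A' s' f = p \<Longrightarrow> sat B' t' f = p"
begin

lemma sat_transfer_Ex:
  assumes blk: "blk p (Some True) (Ex z f) < k" and sat: "sat A s (Ex z f) = p"
  shows "sat B t (Ex z f) = p"
proof (cases p)
  case True
  then obtain i where i: "i < length A" "sat A (s(z := i)) f" using sat by auto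
  obtain j where j: "j < length B" "wins_position k r A B (insert z D) (s(z := i)) (t(z := j))"
    using wins_position_Suc_same[OF P i(1)] by blast
  have "blk True (Some True) f < k" using blk True by simp
  from IH[OF j(2) this] i(2) have "sat B (t(z := j)) f" by simp
  with j(1) True show ?thesis by auto
next
  case False
  then obtain k' where k: "k = Suc k'" "0 < k'" "blk True (Some True) f < k'"
    using blk blk_flip[of True "Some True" f] by (cases k) auto
  have "\<not> sat B (t(z := j)) f" if j: "j < length B" for j
  proof
    assume sat_j: "sat B (t(z := j)) f"
    obtain i where i: "i < length A" "wins_position k' r B A (insert z D) (t(z := j)) (s(z := i))"
      using wins_position_Suc_same[OF wins_position_swap[OF P[unfolded k] k(2)] j] by blast
    from IH[OF i(2) k(3)] sat_j have "sat A (s(z := i)) f" by simp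
    with i(1) sat False show False by auto
  qed
  with False show ?thesis by auto
qed

lemma sat_transfer_All:
  assumes blk: "blk p (Some True) (All z f) < k" and sat: "sat A s (All z f) = p"
  shows "sat B t (All z f) = p"
proof (cases p)
  case False
  then obtain i where i: "i < length A" "\<not> sat A (s(z := i)) f" using sat by auto
  obtain j where j: "j < length B" "wins_position k r A B (insert z D) (s(z := i)) (t(z := j))"
    using wins_position_Suc_same[OF P i(1)] by blast
  have "blk False (Some True) f < k" using blk False by simp
  from IH[OF j(2) this] i(2) have "\<not> sat B (t(z := j)) f" by simp
  with j(1) False show ?thesis by auto
next
  case True
  then obtain k' where k: "k = Suc k'" "0 < k'" "blk False (Some True) f < k'"
    using blk blk_flip[of False "Some True" f] by (cases k) auto
  have "sat B (t(z := j)) f" if j: "j < length B" for j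
  proof (rule ccontr)
    assume sat_j: "\<not> sat B (t(z := j)) f"
    obtain i where i: "i < length A" "wins_position k' r B A (insert z D) (t(z := j)) (s(z := i))"
      using wins_position_Suc_same[OF wins_position_swap[OF P[unfolded k] k(2)] j] by blast
    from IH[OF i(2) k(3)] sat_j have "\<not> sat A (s(z := i)) f" by simp
    with i(1) sat True show False by auto
  qed
  with True show ?thesis by auto
qed

end

lemma wins_position_sat:
  "freev f \<subseteq> D \<Longrightarrow> qdepth f \<le> r \<Longrightarrow> blk p (Some True) f < k \<Longrightarrow> wins_position k r A B D s t \<Longrightarrow>
   sat A s f = p \<Longrightarrow> sat B t f = p"
proof (induction f arbitrary: p D r k A B s t)
  case (Lett a x)
  then show ?case using wins_position_letter[of k r A B D s t x] by auto
next
  case (NLett a x)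
  then show ?case using wins_position_letter[of k r A B D s t x] by auto
next
  case (Less x y)
  then show ?case using wins_position_order[of k r A B D s t x y] by auto
next
  case (NLess x y)
  then show ?case using wins_position_order[of k r A B D s t x y] by auto
next
  case (Eq x y)
  then show ?case using wins_position_order[of k r A B D s t x y] by auto
next
  case (NEq x y)
  then show ?case using wins_position_order[of k r A B D s t x y] by auto
next
  case (Neg f)
  then show ?case using Neg.IH[of D r "\<not> p"] by auto
next
  case (Conj f g)
  then show ?case using Conj.IH(1)[of D r p] Conj.IH(2)[of D r p] by (cases p) auto
next
  case (Disj f g)
  then show ?case using Disj.IH(1)[of D r p] Disj.IH(2)[of D r p] by (cases p) auto
next
  case (Ex z f)
  from Ex.prems(2) obtain r' where r: "r = Suc r'" "qdepth f \<le> r'" by (cases r) auto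
  have "freev f \<subseteq> insert z D" using Ex.prems(1) by auto
  from sat_transfer_Ex[OF Ex.prems(4)[unfolded r] Ex.IH[OF this r(2)] Ex.prems(3,5)] show ?case .
next
  case (All z f)
  from All.prems(2) obtain r' where r: "r = Suc r'" "qdepth f \<le> r'" by (cases r) auto
  have "freev f \<subseteq> insert z D" using All.prems(1) by auto
  from sat_transfer_All[OF All.prems(4)[unfolded r] All.IH[OF this r(2)] All.prems(3,5)] show ?case .
qed simp_all

lemma sentence_sat_eq:
  "freev f = {} \<Longrightarrow> qdepth f \<le> r \<Longrightarrow> blk p None f \<le> k \<Longrightarrow>
   (0 < k \<Longrightarrow> opening_wins k r u v \<and> opening_wins k r v u) \<Longrightarrow> sat u s f = sat v t f"
proof (induction f arbitrary: p)
  case (Neg f)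
  then show ?case using Neg.IH[of "\<not> p"] by simp
next
  case (Conj f g)
  then show ?case using Conj.IH(1)[of p] Conj.IH(2)[of p] by simp
next
  case (Disj f g)
  then show ?case using Disj.IH(1)[of p] Disj.IH(2)[of p] by simp
next
  case (Ex z f)
  have "blk True (Some True) (Ex z f) < k"
    and "wins_position k r u v {} s t" "wins_position k r v u {} t s"
    using Ex.prems blk_flip[of True "Some True" f] by (cases p; auto simp: wins_position_def)+
  then show ?case using wins_position_sat[of "Ex z f" "{}" r True k] Ex.prems by blast
next
  case (All z f)
  have "blk False (Some True) (All z f) < k"
    and "wins_position k r u v {} s t" "wins_position k r v u {} t s"
    using All.prems blk_flip[of False "Some True" f] by (cases p; auto simp: wins_position_def)+
  then show ?case using wins_position_sat[of "All z f" "{}" r False k] All.prems by blast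
qed simp_all

lemma opening_wins_uw_vw:
  assumes "2 \<le> m"
  shows "opening_wins (m - 1) n (uw m n) (vw m n) \<and> opening_wins (m - 1) n (vw m n) (uw m n)"
proof -
  have "wins_all (replicate i Free) r x y"
    if "i \<le> m - 1" "r < n" "x = uw m n \<and> y = vw m n \<or> x = vw m n \<and> y = uw m n" for i r x y
    using block_equiv_uw_vw[OF assms, of n] that wins_all_mono[OF _ pattern_weaker_prefix]
    unfolding block_equiv_def by blast
  then show ?thesis by (auto simp: opening_wins_def)
qed

theorem lemma4p10:
  fixes m n :: nat
  assumes "m \<ge> 1" and "n \<ge> 1"
  shows "equiv2 m (m - 1) n (uw m n) (vw m n)"
  unfolding equiv2_def
proof
  fix f assume "f \<in> FO2_kn m (m - 1) n"
  then have f: "freev f = {}" "qdepth f \<le> n" "blk True None f \<le> m - 1"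
    by (auto simp: FO2_kn_def alt_blocks_def)
  have "0 < m - 1 \<Longrightarrow>
      opening_wins (m - 1) n (uw m n) (vw m n) \<and> opening_wins (m - 1) n (vw m n) (uw m n)"
    using opening_wins_uw_vw by simp
  from sentence_sat_eq[OF f this] show "models (uw m n) f \<longleftrightarrow> models (vw m n) f"
    by (simp add: models_def)
qed

end
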